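(* Let $(h_n)_{n\ge 0}$ be a sequence of positive real numbers (not depending on $a$) and, for $a>0$, let \[ h(a,x)=\sum_{n=0}^{\infty}\frac{h_n}{(a)_n}x^n \] (a formal power series in $x$). Let $b>a>0$ and $\delta>0$, and write \[ \lambda_{a,b,\delta}(x)=h(a+\delta,x)h(b,x)-h(b+\delta,x)h(a,x)=\sum_{m=0}^{\infty}\lambda_m x^m . \] Then $\lambda_0=0$ and $\lambda_m<0$ for all $m\ge 1$, so that $a\mapsto h(a,x)$ is strictly log-convex for $x>0$.
   Context: $(a)_n=a(a+1)\cdots(a+n-1)$ is the Pochhammer symbol, $(a)_0=1$. Power series are understood formally; the log-convexity statement refers to values $x>0$ at which the series converge. *)

theory Defs
  imports "HOL-Analysis.Analysis" "HOL-Computational_Algebra.Formal_Power_Series"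
begin

definition hfps :: "(nat \<Rightarrow> real) \<Rightarrow> real \<Rightarrow> real fps" where
  "hfps hc a = Abs_fps (\<lambda>n. hc n / pochhammer a n)"

definition lam_fps :: "(nat \<Rightarrow> real) \<Rightarrow> real \<Rightarrow> real \<Rightarrow> real \<Rightarrow> real fps" where
  "lam_fps hc a b d = hfps hc (a + d) * hfps hc b - hfps hc (b + d) * hfps hc a"

text \<open>Value of the series h(a,x) at a real point x (meaningful where it converges).\<close>
definition hval :: "(nat \<Rightarrow> real) \<Rightarrow> real \<Rightarrow> real \<Rightarrow> real" where
  "hval hc a x = (\<Sum>n. hc n / pochhammer a n * x ^ n)"

end

theory Submission
  imports Defs
begin

text \<open>
  Coefficientwise, \<open>\<lambda>\<^sub>m = \<Sum>\<^bsub>i+j=m\<^esub> h\<^sub>i h\<^sub>j (1/((a+d)\<^sub>i (b)\<^sub>j) - 1/((b+d)\<^sub>i (a)\<^sub>j))\<close>, and pairing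
  the terms \<open>(i,j)\<close> and \<open>(j,i)\<close> reduces the sign of \<open>\<lambda>\<^sub>m\<close> to an inequality between Pochhammer
  symbols. Writing \<open>k = j + n\<close> and \<open>(x)\<^bsub>j+n\<^esub> = (x)\<^sub>j (x+j)\<^sub>n\<close>, that inequality follows from
  \<open>(a)\<^sub>j (b+d)\<^sub>j < (a+d)\<^sub>j (b)\<^sub>j\<close> for \<open>j > 0\<close> together with the fact that the difference
  \<open>1/(x)\<^sub>n - 1/(x+d)\<^sub>n\<close> is strictly decreasing in \<open>x > 0\<close> for \<open>n > 0\<close>; the latter is a discrete
  product rule, as each factor \<open>1/(x+i)\<close> is positive and decreasing with decreasing differences.
  At a point \<open>x > 0\<close> of convergence the series converge absolutely, so the Cauchy product
  turns the coefficient signs into the inequality between the values.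
\<close>


lemma inverse_pochhammer_antimono:
  fixes x y :: real
  assumes "0 < x" "x \<le> y"
  shows "1 / pochhammer y n \<le> 1 / pochhammer x n"
proof -
  have "pochhammer x n \<le> pochhammer y n"
    unfolding pochhammer_prod using assms by (intro prod_mono) auto
  then show ?thesis
    using assms pochhammer_pos[of x n] by (intro divide_left_mono) auto
qed

lemma pochhammer_cross_less:
  fixes a b d :: real
  assumes "0 < a" "a < b" "0 < d" "0 < j"
  shows "pochhammer a j * pochhammer (b + d) j < pochhammer (a + d) j * pochhammer b j"
proof -
  have factor_less: "(a + real i) * (b + d + real i) < (a + d + real i) * (b + real i)" for i
  proof -
    have "(a + d + real i) * (b + real i) - (a + real i) * (b + d + real i) = d * (b - a)"
      by (simp add: algebra_simps)
    moreover have "d * (b - a) > 0"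
      using assms by simp
    ultimately show ?thesis
      by linarith
  qed
  show ?thesis
    unfolding pochhammer_prod prod.distrib[symmetric]
  proof (rule prod_mono_strict[of 0])
    show "\<And>i. 0 \<le> (a + real i) * (b + d + real i) \<and> (a + real i) * (b + d + real i)
                  \<le> (a + d + real i) * (b + real i)"
      using assms factor_less by (auto intro: less_imp_le)
    show "\<And>i. 0 < (a + d + real i) * (b + real i)"
      using assms by simp
  qed (use assms factor_less[of 0] in auto)
qed

lemma inverse_shift_diff_strict_antimono:
  fixes x y d :: real
  assumes "0 < x" "x < y" "0 < d"
  shows "1 / y - 1 / (y + d) < 1 / x - 1 / (x + d)"
proof -
  have diff_eq: "1 / z - 1 / (z + d) = d / (z * (z + d))" if "0 < z" for z
    using that assms by (simp add: field_simps)
  have "x * (x + d) < y * (y + d)"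
    using assms by (intro mult_strict_mono) auto
  then have "d / (y * (y + d)) < d / (x * (x + d))"
    using assms by (intro divide_strict_left_mono) auto
  then show ?thesis
    using assms by (simp add: diff_eq)
qed

lemma shift_diff_mult_less:
  fixes f g :: "real \<Rightarrow> real"
  assumes "x < y" "0 < d"
    and "antimono_on {x..} f" "antimono_on {x..} g"
    and "\<And>z. x \<le> z \<Longrightarrow> 0 < f z" "\<And>z. x \<le> z \<Longrightarrow> 0 < g z"
    and f_diff: "f y - f (y + d) \<le> f x - f (x + d)"
    and g_diff: "g y - g (y + d) < g x - g (x + d)"
  shows "f y * g y - f (y + d) * g (y + d) < f x * g x - f (x + d) * g (x + d)"
proof -
  have f_le: "f w \<le> f z" if "x \<le> z" "z \<le> w" for z w
    using monotone_onD[OF assms(3), of z w] that by simp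
  have g_le: "g w \<le> g z" if "x \<le> z" "z \<le> w" for z w
    using monotone_onD[OF assms(4), of z w] that by simp
  have g_nonneg_xd: "0 \<le> g (x + d)"
    using assms(2) assms(6)[of "x + d"] by simp
  have split: "f z * g z - f (z + d) * g (z + d)
      = f z * (g z - g (z + d)) + g (z + d) * (f z - f (z + d))" for z
    by (simp add: algebra_simps)
  have "f y * (g y - g (y + d)) < f y * (g x - g (x + d))"
    using assms g_diff by simp
  also have "\<dots> \<le> f x * (g x - g (x + d))"
    using assms g_le[of y "y + d"] g_diff f_le[of x y]
    by (intro mult_right_mono) auto
  finally have "f y * (g y - g (y + d)) < f x * (g x - g (x + d))" .
  moreover have "g (y + d) * (f y - f (y + d)) \<le> g (x + d) * (f x - f (x + d))"
    using assms g_le[of "x + d" "y + d"] f_le[of y "y + d"] f_diff g_nonneg_xd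
    by (intro mult_mono) auto
  ultimately show ?thesis
    by (simp only: split)
qed

lemma inverse_pochhammer_shift_diff_strict_antimono:
  fixes x y d :: real
  assumes "0 < x" "x < y" "0 < d" "0 < n"
  shows "1 / pochhammer y n - 1 / pochhammer (y + d) n < 1 / pochhammer x n - 1 / pochhammer (x + d) n"
proof -
  obtain m where n: "n = Suc m"
    using assms(4) gr0_implies_Suc by blast
  show ?thesis
    unfolding n
  proof (induction m)
    case 0
    show ?case
      using inverse_shift_diff_strict_antimono[OF assms(1-3)] by simp
  next
    case (Suc m)
    define f where "f z = 1 / pochhammer z (Suc m)" for z :: real
    define g where "g z = 1 / (z + real (Suc m))" for z :: real
    have split: "1 / pochhammer z (Suc (Suc m)) = f z * g z" for z
      unfolding f_def g_def pochhammer_Suc[of z "Suc m"] by simp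
    have f_anti: "antimono_on {x..} f"
      using assms(1) inverse_pochhammer_antimono by (auto intro!: monotone_onI simp: f_def)
    have g_anti: "antimono_on {x..} g"
      using assms(1) by (auto intro!: monotone_onI frac_le simp: g_def)
    show ?case
      unfolding split
    proof (rule shift_diff_mult_less[OF assms(2,3) f_anti g_anti])
      show "f y - f (y + d) \<le> f x - f (x + d)"
        using Suc.IH by (simp add: f_def)
      show "g y - g (y + d) < g x - g (x + d)"
        using inverse_shift_diff_strict_antimono[of "x + Suc m" "y + Suc m" d] assms
        by (simp add: g_def add_ac)
    qed (use assms(1) in \<open>simp_all add: f_def g_def pochhammer_pos\<close>)
  qed
qed

lemma inverse_pochhammer_pair_less_of_le:
  fixes a b d :: real
  assumes "0 < a" "a < b" "0 < d" "j \<le> k" "0 < j + k"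
  shows "1 / (pochhammer (a + d) k * pochhammer b j) + 1 / (pochhammer (a + d) j * pochhammer b k)
       < 1 / (pochhammer (b + d) k * pochhammer a j) + 1 / (pochhammer (b + d) j * pochhammer a k)"
proof -
  obtain n where k: "k = j + n"
    using assms(4) le_Suc_ex by blast
  define G where "G z = 1 / pochhammer z n" for z :: real
  define p1 where "p1 = pochhammer (a + d) j * pochhammer b j"
  define p2 where "p2 = pochhammer a j * pochhammer (b + d) j"
  define s1 where "s1 = G (a + d + real j) + G (b + real j)"
  define s2 where "s2 = G (a + real j) + G (b + d + real j)"
  have pos: "0 < pochhammer z i" if "0 < z" for z :: real and i
    using that by (rule pochhammer_pos)
  have lhs: "1 / (pochhammer (a + d) k * pochhammer b j) + 1 / (pochhammer (a + d) j * pochhammer b k)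
      = s1 / p1"
    using assms pos[of "a + d + real j" n] pos[of "b + real j" n] pos[of "a + d" j] pos[of b j]
    by (simp add: k pochhammer_product' s1_def G_def p1_def field_simps)
  have rhs: "1 / (pochhammer (b + d) k * pochhammer a j) + 1 / (pochhammer (b + d) j * pochhammer a k)
      = s2 / p2"
    using assms pos[of "a + real j" n] pos[of "b + d + real j" n] pos[of a j] pos[of "b + d" j]
    by (simp add: k pochhammer_product' s2_def G_def p2_def field_simps)
  have s_less: "s1 < s2" if "0 < n"
    using inverse_pochhammer_shift_diff_strict_antimono[of "a + real j" "b + real j" d n] assms that
    by (simp add: s1_def s2_def G_def algebra_simps)
  have p_less: "p2 < p1" if "0 < j"
    using pochhammer_cross_less[OF assms(1-3) that] by (simp add: p1_def p2_def mult.commute)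
  have "0 < p2"
    using assms by (simp add: p2_def pos)
  moreover have "0 < s1"
    using assms pos by (simp add: s1_def G_def add_pos_pos)
  moreover have "s1 \<le> s2" "p2 \<le> p1"
    using s_less p_less by (cases n; cases j; simp add: s1_def s2_def G_def p1_def p2_def)+
  ultimately have "s1 / p1 < s2 / p2"
    using s_less p_less assms(5) k by (cases "0 < j") (auto intro: frac_less frac_less2)
  then show ?thesis
    by (simp only: lhs rhs)
qed

lemma inverse_pochhammer_pair_less:
  fixes a b d :: real
  assumes "0 < a" "a < b" "0 < d" "0 < j + k"
  shows "1 / (pochhammer (a + d) k * pochhammer b j) + 1 / (pochhammer (a + d) j * pochhammer b k)
       < 1 / (pochhammer (b + d) k * pochhammer a j) + 1 / (pochhammer (b + d) j * pochhammer a k)"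
  using assms(4)
proof (induction j k rule: linorder_wlog)
  case (le j k)
  then show ?case
    by (rule inverse_pochhammer_pair_less_of_le[OF assms(1-3)])
next
  case (sym j k)
  then show ?case
    by (simp add: add_ac)
qed

lemma sum_atMost_neg_by_reflection:
  fixes f :: "nat \<Rightarrow> 'a::linordered_ab_group_add"
  assumes "\<And>i. i \<le> m \<Longrightarrow> f i + f (m - i) < 0"
  shows "(\<Sum>i\<le>m. f i) < 0"
proof -
  have "(\<Sum>i\<le>m. f (m - i)) = (\<Sum>i\<le>m. f i)"
    using sum.atLeastAtMost_rev[of f 0 m] by (simp add: atLeast0AtMost)
  moreover have "(\<Sum>i\<le>m. f i + f (m - i)) < (\<Sum>i\<le>m. 0)"
    using assms by (intro sum_strict_mono) auto
  ultimately have "(\<Sum>i\<le>m. f i) + (\<Sum>i\<le>m. f i) < 0"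
    by (simp add: sum.distrib)
  then show ?thesis
    by (meson add_nonneg_nonneg not_le)
qed

lemma lam_fps_nth:
  "fps_nth (lam_fps hc a b d) m = (\<Sum>i\<le>m. hc i * hc (m - i) *
     (1 / (pochhammer (a + d) i * pochhammer b (m - i)) - 1 / (pochhammer (b + d) i * pochhammer a (m - i))))"
  unfolding lam_fps_def fps_sub_nth fps_mult_nth atLeast0AtMost sum_subtractf[symmetric]
  by (rule sum.cong) (simp_all add: hfps_def right_diff_distrib)

lemma lam_fps_nth_0: "fps_nth (lam_fps hc a b d) 0 = 0"
  by (simp add: lam_fps_nth)

lemma lam_fps_nth_neg:
  fixes hc :: "nat \<Rightarrow> real"
  assumes "\<And>n. 0 < hc n" "0 < a" "a < b" "0 < d" "0 < m"
  shows "fps_nth (lam_fps hc a b d) m < 0"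
  unfolding lam_fps_nth
proof (rule sum_atMost_neg_by_reflection)
  fix i assume "i \<le> m"
  define j where "j = m - i"
  have "m - j = i"
    using \<open>i \<le> m\<close> by (simp add: j_def)
  have "hc i * hc j * (1 / (pochhammer (a + d) i * pochhammer b j) + 1 / (pochhammer (a + d) j * pochhammer b i)
      - (1 / (pochhammer (b + d) i * pochhammer a j) + 1 / (pochhammer (b + d) j * pochhammer a i))) < 0"
    using inverse_pochhammer_pair_less[OF assms(2-4), of j i] assms(1)[of i] assms(1)[of j] assms(5)
    by (intro mult_pos_neg) (auto simp: j_def)
  then show "hc i * hc (m - i) * (1 / (pochhammer (a + d) i * pochhammer b (m - i))
        - 1 / (pochhammer (b + d) i * pochhammer a (m - i)))
      + hc (m - i) * hc (m - (m - i)) * (1 / (pochhammer (a + d) (m - i) * pochhammer b (m - (m - i)))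
        - 1 / (pochhammer (b + d) (m - i) * pochhammer a (m - (m - i)))) < 0"
    unfolding j_def[symmetric] \<open>m - j = i\<close> by (simp add: algebra_simps)
qed

lemma sums_eval_fps_mult:
  fixes F G :: "'a::{banach, real_normed_field} fps"
  assumes "summable (\<lambda>n. norm (fps_nth F n * z ^ n))" "summable (\<lambda>n. norm (fps_nth G n * z ^ n))"
  shows "(\<lambda>n. fps_nth (F * G) n * z ^ n) sums (eval_fps F z * eval_fps G z)"
proof -
  have "fps_nth (F * G) n * z ^ n = (\<Sum>i\<le>n. (fps_nth F i * z ^ i) * (fps_nth G (n - i) * z ^ (n - i)))" for n
    unfolding fps_mult_nth atLeast0AtMost sum_distrib_right
    by (rule sum.cong) (simp_all add: power_add[symmetric] mult_ac)
  then show ?thesis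
    using Cauchy_product_sums[OF assms] by (simp add: eval_fps_def)
qed

lemma power_series_sums_neg:
  fixes c :: "nat \<Rightarrow> real"
  assumes "(\<lambda>n. c n * x ^ n) sums s" "0 < x" "c 0 = 0" "\<And>n. 0 < n \<Longrightarrow> c n < 0"
  shows "s < 0"
proof -
  have "(\<lambda>n. - (c n * x ^ n)) sums - s"
    using assms(1) by (rule sums_minus)
  moreover have "0 < (\<Sum>n. - (c n * x ^ n))"
  proof (rule suminf_pos2[of _ 1])
    show "summable (\<lambda>n. - (c n * x ^ n))"
      using calculation by (rule sums_summable)
    show "0 \<le> - (c n * x ^ n)" for n
      using assms(2-4) mult_neg_pos[of "c n" "x ^ n"] zero_less_power[of x n] by (cases "n = 0") auto
    show "0 < - (c 1 * x ^ 1)"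
      using assms(2,4) by (simp add: mult_neg_pos)
  qed
  ultimately show ?thesis
    using sums_unique by fastforce
qed

lemma hval_eq_eval_fps: "hval hc c x = eval_fps (hfps hc c) x"
  by (simp add: hval_def eval_fps_def hfps_def)

lemma hfps_abs_summable:
  fixes hc :: "nat \<Rightarrow> real"
  assumes "\<And>n. 0 < hc n" "0 < c" "0 < x" "summable (\<lambda>n. hc n / pochhammer c n * x ^ n)"
  shows "summable (\<lambda>n. norm (fps_nth (hfps hc c) n * x ^ n))"
proof -
  have "norm (fps_nth (hfps hc c) n * x ^ n) = hc n / pochhammer c n * x ^ n" for n
    using assms(1)[of n] assms(2,3) pochhammer_pos[of c n] by (simp add: hfps_def)
  then show ?thesis
    using assms(4) by simp
qed

theorem theorem3:
  fixes hc :: "nat \<Rightarrow> real" and a b d :: real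
  assumes hpos: "\<And>n. hc n > 0"
    and ab: "0 < a" "a < b" and dpos: "0 < d"
  shows "fps_nth (lam_fps hc a b d) 0 = 0
       \<and> (\<forall>m\<ge>1. fps_nth (lam_fps hc a b d) m < 0)
       \<and> (\<forall>x>0. (\<forall>c\<in>{a, b, a + d, b + d}. summable (\<lambda>n. hc n / pochhammer c n * x ^ n)) \<longrightarrow>
                hval hc (a + d) x * hval hc b x < hval hc (b + d) x * hval hc a x)"
proof (intro conjI allI impI)
  show "fps_nth (lam_fps hc a b d) 0 = 0"
    by (rule lam_fps_nth_0)
  show "fps_nth (lam_fps hc a b d) m < 0" if "1 \<le> m" for m
    using lam_fps_nth_neg[OF hpos ab dpos] that by simp
  fix x :: real
  assume x: "0 < x" and conv: "\<forall>c\<in>{a, b, a + d, b + d}. summable (\<lambda>n. hc n / pochhammer c n * x ^ n)"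
  have product_sums: "(\<lambda>n. fps_nth (hfps hc c * hfps hc c') n * x ^ n) sums (hval hc c x * hval hc c' x)"
    if "c \<in> {a, b, a + d, b + d}" "c' \<in> {a, b, a + d, b + d}" for c c'
    unfolding hval_eq_eval_fps using that conv ab dpos
    by (intro sums_eval_fps_mult hfps_abs_summable[OF hpos _ x]) auto
  have "(\<lambda>n. fps_nth (lam_fps hc a b d) n * x ^ n)
      sums (hval hc (a + d) x * hval hc b x - hval hc (b + d) x * hval hc a x)"
    unfolding lam_fps_def fps_sub_nth left_diff_distrib by (intro sums_diff product_sums) auto
  then have "hval hc (a + d) x * hval hc b x - hval hc (b + d) x * hval hc a x < 0"
    using x lam_fps_nth_0 lam_fps_nth_neg[OF hpos ab dpos] by (rule power_series_sums_neg)
  then show "hval hc (a + d) x * hval hc b x < hval hc (b + d) x * hval hc a x"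
    by simp
qed

end
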